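(* Let $(\mathbf Z_n,\mathbf A_{n\times n})$ be generated from the stochastic block model with parameters $(\pi,\rho_nS)$, with $S>0$ fixed and $\rho_n\to0$. For $\mathbf z_n,\mathbf e_n\in[k]^n$ let \[ W(\mathbf e_n,\mathbf z_n)=\frac12\sum_{1\le a,b\le k}\Bigl(\frac{o_{ab}(\mathbf e_n)}{n^2}-\frac{\mathbb E(o_{ab}(\mathbf e_n))}{n^2}-\frac{o_{ab}(\mathbf z_n)}{n^2}+\frac{\mathbb E(o_{ab}(\mathbf z_n))}{n^2}\Bigr)\log S_{ab}, \] with expectations conditional on $\mathbf Z_n=\mathbf z_n$. Then there is a constant $D$ depending only on $S$ such that for all $\mathbf z_n,\mathbf e_n\in[k]^n$ and all $x$, \[ \mathbb P\bigl(W(\mathbf e_n,\mathbf z_n)>x\mid\mathbf Z_n=\mathbf z_n\bigr)\le\exp\Bigl[-\sup_{t\in(0,1]}\bigl\{n^2\bigl(xt-\rho_nC_t(R,S)\bigr)\bigr\}+D\rho_n m^2\Bigr], \] where $R=R(\mathbf e_n,\mathbf z_n)$, $m=d(\mathbf e_n,\mathbf z_n)$, and \[ C_t(R,S)=\sum_a\sum_{b\ne b'}[R^T\mathbf 1]_a\,K_t(S_{ab}\|S_{ab'})\,R_{b'b},\qquad K_t(p\|q)=p^{1-t}q^t+tp\log(p/q)-p. \]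
   Context: SBM with parameters $(\pi,\rho_nS)$: $k\ge2$ fixed; $\pi$ a probability vector on $[k]$ with all $\pi_a>0$; $S$ a fixed symmetric $k\times k$ matrix with strictly positive entries; $\rho_n>0$. $\mathbf Z_n$ i.i.d. with law $\pi$; given $\mathbf Z_n=\mathbf z_n$, $\mathbf A_{n\times n}$ symmetric, zero diagonal, $A_{ij}$ ($i<j$) independent Bernoulli$(\rho_nS_{z_iz_j})$. $o_{ab}(\mathbf e_n)=\sum_{i,j}\mathbf 1\{e_i=a,e_j=b\}A_{ij}$. Confusion matrix $R_{ab}(\mathbf e_n,\mathbf z_n)=\frac1n\sum_i\mathbf 1\{e_i=a,z_i=b\}$, $\mathbf 1$ the all-ones vector (so $[R^T\mathbf 1]_a=n_a(\mathbf z_n)/n$). $d(\mathbf e_n,\mathbf z_n)=\#\{i:e_i\ne z_i\}$ is the Hamming distance. *)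

theory Defs
  imports "HOL-Probability.Probability"
begin

text \<open>Labels are 0..<k, vertices are 0..<n.  Upper-triangle vertex pairs.\<close>
definition sbm_edges :: "nat \<Rightarrow> (nat \<times> nat) set" where
  "sbm_edges n = {(i, j). i < j \<and> j < n}"

definition sbm_adj :: "(nat \<times> nat \<Rightarrow> bool) \<Rightarrow> nat \<Rightarrow> nat \<Rightarrow> real" where
  "sbm_adj X i j = (if i < j then of_bool (X (i, j)) else if j < i then of_bool (X (j, i)) else 0)"

text \<open>Conditional law of the adjacency matrix A given Z_n = z: independent
  Bernoulli(rho * S (z i) (z j)) entries for i < j.\<close>
definition sbm_cond :: "nat \<Rightarrow> real \<Rightarrow> (nat \<Rightarrow> nat \<Rightarrow> real) \<Rightarrow> (nat \<Rightarrow> nat)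
    \<Rightarrow> (nat \<Rightarrow> nat \<Rightarrow> real) pmf" where
  "sbm_cond n \<rho> S z = map_pmf sbm_adj
     (Pi_pmf (sbm_edges n) False (\<lambda>(i, j). bernoulli_pmf (\<rho> * S (z i) (z j))))"

definition block_count :: "nat \<Rightarrow> (nat \<Rightarrow> nat) \<Rightarrow> (nat \<Rightarrow> nat \<Rightarrow> real) \<Rightarrow> nat \<Rightarrow> nat \<Rightarrow> real" where
  "block_count n e A a b = (\<Sum>i<n. \<Sum>j<n. if e i = a \<and> e j = b then A i j else 0)"

definition sbm_W :: "nat \<Rightarrow> nat \<Rightarrow> real \<Rightarrow> (nat \<Rightarrow> nat \<Rightarrow> real) \<Rightarrow> (nat \<Rightarrow> nat) \<Rightarrow> (nat \<Rightarrow> nat)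
    \<Rightarrow> (nat \<Rightarrow> nat \<Rightarrow> real) \<Rightarrow> real" where
  "sbm_W n k \<rho> S z e A = 1/2 * (\<Sum>a<k. \<Sum>b<k.
      (block_count n e A a b / (real n)^2
       - measure_pmf.expectation (sbm_cond n \<rho> S z) (\<lambda>B. block_count n e B a b) / (real n)^2
       - block_count n z A a b / (real n)^2
       + measure_pmf.expectation (sbm_cond n \<rho> S z) (\<lambda>B. block_count n z B a b) / (real n)^2)
      * ln (S a b))"

definition confusion :: "nat \<Rightarrow> (nat \<Rightarrow> nat) \<Rightarrow> (nat \<Rightarrow> nat) \<Rightarrow> nat \<Rightarrow> nat \<Rightarrow> real" where
  "confusion n e z a b = real (card {i\<in>{..<n}. e i = a \<and> z i = b}) / real n"

definition hamming :: "nat \<Rightarrow> (nat \<Rightarrow> nat) \<Rightarrow> (nat \<Rightarrow> nat) \<Rightarrow> nat" where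
  "hamming n e z = card {i\<in>{..<n}. e i \<noteq> z i}"

definition K_t :: "real \<Rightarrow> real \<Rightarrow> real \<Rightarrow> real" where
  "K_t t p q = p powr (1 - t) * q powr t + t * p * ln (p / q) - p"

definition C_t :: "nat \<Rightarrow> real \<Rightarrow> (nat \<Rightarrow> nat \<Rightarrow> real) \<Rightarrow> (nat \<Rightarrow> nat \<Rightarrow> real) \<Rightarrow> real" where
  "C_t k t R S = (\<Sum>a<k. \<Sum>b<k. \<Sum>b'<k.
      if b \<noteq> b' then (\<Sum>c<k. R c a) * K_t t (S a b) (S a b') * R b' b else 0)"

end

theory Submission
  imports Defs
begin

(* Expanding the block counts, n^2 W(e,z) is the centred sum over vertex pairs i < j of
   (A_ij - rho S(z_i,z_j)) log(S(e_i,e_j) / S(z_i,z_j)), a sum of independent centred Bernoulli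
   variables.  The Chernoff bound, with the Bernoulli moment generating function estimated by
   1 + u <= exp u, gives for every t in (0,1]
     P(W > x) <= exp(-t n^2 x + rho sum_{i<j} K_t(S(z_i,z_j) || S(e_i,e_j))).
   A pair with both endpoints correctly labelled contributes K_t(p || p) = 0, a pair with exactly
   one relabelled endpoint is one of the terms of n^2 C_t(R,S), and the at most m^2 pairs with
   both endpoints relabelled are bounded by a constant depending on S only.  Taking the best t
   gives the claim. *)

lemma K_t_self: "s > 0 \<Longrightarrow> K_t t s s = 0"
  unfolding K_t_def by (simp add: powr_add[symmetric])

lemma K_t_eq_exp:
  assumes "s > 0" "q > 0"
  shows "K_t t s q = s * (exp (t * ln (q / s)) - 1 - t * ln (q / s))"
proof -
  have "s * exp (t * ln (q / s)) = s powr (1 - t) * q powr t"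
    using assms by (simp add: powr_def ln_div exp_diff exp_add algebra_simps)
  moreover have "ln (s / q) = - ln (q / s)"
    using assms by (simp add: ln_div)
  ultimately show ?thesis
    unfolding K_t_def by (simp add: algebra_simps)
qed

lemma K_t_nonneg:
  assumes "s > 0" "q > 0"
  shows "K_t t s q \<ge> 0"
proof -
  have "0 \<le> exp u - 1 - u" for u :: real
    using exp_ge_add_one_self[of u] by linarith
  then show ?thesis
    using assms by (simp add: K_t_eq_exp)
qed

lemma K_t_le:
  assumes "s > 0" "q > 0" "0 \<le> t" "t \<le> 1"
  shows "K_t t s q \<le> max s q + s * \<bar>ln (s / q)\<bar>"
proof -
  have "s powr (1 - t) * q powr t \<le> max s q powr (1 - t) * max s q powr t"
    using assms by (intro mult_mono powr_mono2) auto
  also have "\<dots> = max s q"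
    using assms by (simp add: powr_add[symmetric])
  finally have "s powr (1 - t) * q powr t \<le> max s q" .
  moreover have "t * s * ln (s / q) \<le> s * \<bar>ln (s / q)\<bar>"
  proof -
    have "t * s * ln (s / q) \<le> t * (s * \<bar>ln (s / q)\<bar>)"
      using assms by (simp add: mult.assoc mult_left_mono)
    also have "\<dots> \<le> s * \<bar>ln (s / q)\<bar>"
      using assms mult_right_mono[of t 1 "s * \<bar>ln (s / q)\<bar>"] by simp
    finally show ?thesis .
  qed
  ultimately show ?thesis
    unfolding K_t_def using assms by linarith
qed

definition K_t_bound :: "nat \<Rightarrow> (nat \<Rightarrow> nat \<Rightarrow> real) \<Rightarrow> real" where
  "K_t_bound k S = (\<Sum>a<k. \<Sum>b<k. \<Sum>c<k. \<Sum>d<k. max (S a b) (S c d) + S a b * \<bar>ln (S a b / S c d)\<bar>)"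

lemma K_t_le_K_t_bound:
  assumes S: "\<forall>a<k. \<forall>b<k. S a b > 0" and "a < k" "b < k" "c < k" "d < k" "0 \<le> t" "t \<le> 1"
  shows "K_t t (S a b) (S c d) \<le> K_t_bound k S"
proof -
  define T where "T a b c d = max (S a b) (S c d) + S a b * \<bar>ln (S a b / S c d)\<bar>" for a b c d
  have T_nonneg: "T a b c d \<ge> 0" if "a < k" "b < k" for a b c d
    unfolding T_def using S that
    by (intro add_nonneg_nonneg mult_nonneg_nonneg) (auto simp: le_max_iff_disj intro: less_imp_le)
  have "K_t t (S a b) (S c d) \<le> T a b c d"
    unfolding T_def using assms by (intro K_t_le) auto
  also have "\<dots> \<le> (\<Sum>d<k. T a b c d)"
    using assms T_nonneg by (intro member_le_sum) auto
  also have "\<dots> \<le> (\<Sum>c<k. \<Sum>d<k. T a b c d)"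
    using assms T_nonneg by (intro member_le_sum[of c _ "\<lambda>c. \<Sum>d<k. T a b c d"] sum_nonneg) auto
  also have "\<dots> \<le> (\<Sum>b<k. \<Sum>c<k. \<Sum>d<k. T a b c d)"
    using assms T_nonneg
    by (intro member_le_sum[of b _ "\<lambda>b. \<Sum>c<k. \<Sum>d<k. T a b c d"] sum_nonneg) auto
  also have "\<dots> \<le> (\<Sum>a<k. \<Sum>b<k. \<Sum>c<k. \<Sum>d<k. T a b c d)"
    using assms T_nonneg
    by (intro member_le_sum[of a _ "\<lambda>a. \<Sum>b<k. \<Sum>c<k. \<Sum>d<k. T a b c d"] sum_nonneg) auto
  finally show ?thesis
    unfolding K_t_bound_def T_def .
qed

lemma bernoulli_centered_mgf_le:
  assumes "0 \<le> p" "p \<le> 1"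
  shows "measure_pmf.expectation (bernoulli_pmf p) (\<lambda>v. exp (u * (of_bool v - p)))
           \<le> exp (p * (exp u - 1 - u))"
proof -
  have "measure_pmf.expectation (bernoulli_pmf p) (\<lambda>v. exp (u * (of_bool v - p)))
      = exp (- (u * p)) * (1 + p * (exp u - 1))"
    using assms by (simp add: exp_diff exp_minus field_simps)
  also have "\<dots> \<le> exp (- (u * p)) * exp (p * (exp u - 1))"
    by (intro mult_left_mono exp_ge_add_one_self) simp
  also have "\<dots> = exp (p * (exp u - 1 - u))"
    by (simp add: exp_add[symmetric] algebra_simps)
  finally show ?thesis .
qed

lemma prob_greater_le_exp_moment:
  fixes M :: "'a pmf" and X :: "'a \<Rightarrow> real"
  assumes "s \<ge> 0" "integrable M (\<lambda>\<omega>. exp (s * X \<omega>))"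
  shows "measure_pmf.prob M {\<omega>. X \<omega> > x}
           \<le> exp (- s * x) * measure_pmf.expectation M (\<lambda>\<omega>. exp (s * X \<omega>))"
proof -
  have "measure_pmf.prob M {\<omega>. X \<omega> > x} = measure_pmf.expectation M (indicator {\<omega>. X \<omega> > x})"
    by simp
  also have "\<dots> \<le> measure_pmf.expectation M (\<lambda>\<omega>. exp (- s * x) * exp (s * X \<omega>))"
  proof (rule integral_mono)
    show "indicator {\<omega>. X \<omega> > x} \<omega> \<le> exp (- s * x) * exp (s * X \<omega>)" for \<omega>
      using assms(1) mult_left_mono[of x "X \<omega>" s]
      by (auto simp: indicator_def simp flip: exp_add)
  qed (use assms in \<open>auto simp: measure_pmf.emeasure_finite less_top[symmetric]\<close>)
  finally show ?thesis
    by simp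
qed

lemma le_exp_SUP_bound:
  fixes f :: "'a \<Rightarrow> real"
  assumes "T \<noteq> {}" and bound: "\<And>t. t \<in> T \<Longrightarrow> P \<le> exp (- f t + c)"
  shows "P \<le> exp (- (SUP t\<in>T. f t) + c)"
proof (cases "P > 0")
  case False
  then show ?thesis
    using exp_gt_zero[of "- (SUP t\<in>T. f t) + c"] by linarith
next
  case True
  have "f t \<le> c - ln P" if "t \<in> T" for t
  proof -
    have "ln P \<le> ln (exp (- f t + c))"
      using bound[OF that] True by (subst ln_le_cancel_iff) auto
    then show ?thesis
      by simp
  qed
  then have "(SUP t\<in>T. f t) \<le> c - ln P"
    by (rule cSUP_least[OF assms(1)])
  then have "exp (ln P) \<le> exp (- (SUP t\<in>T. f t) + c)"
    by simp
  then show ?thesis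
    using True by simp
qed

lemma finite_sbm_edges: "finite (sbm_edges n)"
  by (rule finite_subset[of _ "{..<n} \<times> {..<n}"]) (auto simp: sbm_edges_def)

lemma sum_sbm_edges_Suc:
  "(\<Sum>(i, j)\<in>sbm_edges (Suc n). F i j) = (\<Sum>(i, j)\<in>sbm_edges n. F i j) + (\<Sum>i<n. F i n)"
proof -
  have "sbm_edges (Suc n) = sbm_edges n \<union> (\<lambda>i. (i, n)) ` {..<n}"
    "sbm_edges n \<inter> (\<lambda>i. (i, n)) ` {..<n} = {}"
    by (auto simp: sbm_edges_def)
  then show ?thesis
    by (simp add: sum.union_disjoint finite_sbm_edges sum.reindex inj_on_def)
qed

lemma sum_square_Suc:
  "(\<Sum>i<Suc n. \<Sum>j<Suc n. F i j) =
     (\<Sum>i<n. \<Sum>j<n. F i j) + (\<Sum>i<n. F i n) + (\<Sum>j<n. F n j) + (F n n :: 'a::comm_monoid_add)"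
  by (simp add: sum.distrib add_ac)

lemma sum_square_eq_sum_sbm_edges:
  fixes F :: "nat \<Rightarrow> nat \<Rightarrow> 'a::comm_ring_1"
  assumes "\<And>i j. i < n \<Longrightarrow> j < n \<Longrightarrow> F i j = F j i" and "\<And>i. i < n \<Longrightarrow> F i i = 0"
  shows "(\<Sum>i<n. \<Sum>j<n. F i j) = 2 * (\<Sum>(i, j)\<in>sbm_edges n. F i j)"
  using assms
proof (induction n)
  case 0
  then show ?case by (simp add: sbm_edges_def)
next
  case (Suc n)
  have "(\<Sum>i<n. \<Sum>j<n. F i j) = 2 * (\<Sum>(i, j)\<in>sbm_edges n. F i j)"
    using Suc.prems by (intro Suc.IH) auto
  moreover have "(\<Sum>j<n. F n j) = (\<Sum>i<n. F i n)"
    using Suc.prems(1) by (intro sum.cong) auto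
  moreover have "F n n = 0"
    using Suc.prems(2) by simp
  ultimately show ?case
    unfolding sum_square_Suc sum_sbm_edges_Suc by (simp add: distrib_left)
qed

lemma sum_sbm_edges_le_sum_square:
  fixes F :: "nat \<Rightarrow> nat \<Rightarrow> 'a::ordered_comm_monoid_add"
  assumes "\<And>i j. i < n \<Longrightarrow> j < n \<Longrightarrow> F i j \<ge> 0"
  shows "(\<Sum>(i, j)\<in>sbm_edges n. F i j + F j i) \<le> (\<Sum>i<n. \<Sum>j<n. F i j)"
  using assms
proof (induction n)
  case 0
  then show ?case by (simp add: sbm_edges_def)
next
  case (Suc n)
  have "(\<Sum>(i, j)\<in>sbm_edges n. F i j + F j i) + (\<Sum>i<n. F i n + F n i)
      \<le> (\<Sum>i<n. \<Sum>j<n. F i j) + (\<Sum>i<n. F i n + F n i)"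
    using Suc by (intro add_right_mono Suc.IH) auto
  also have "\<dots> \<le> (\<Sum>i<n. \<Sum>j<n. F i j) + (\<Sum>i<n. F i n) + (\<Sum>j<n. F n j) + F n n"
    using Suc.prems[of n n] by (simp add: sum.distrib add_increasing2 flip: add.assoc)
  finally show ?case
    unfolding sum_square_Suc sum_sbm_edges_Suc .
qed

lemma sum_fibres_weighted:
  fixes h :: "'i \<Rightarrow> 'a::comm_semiring_1"
  assumes "finite I" "finite L" "f ` I \<subseteq> L"
  shows "(\<Sum>a\<in>L. (\<Sum>i\<in>I. if f i = a then h i else 0) * g a) = (\<Sum>i\<in>I. h i * g (f i))"
proof -
  have "(\<Sum>i\<in>I. if f i = a then h i else 0) * g a = (\<Sum>i | i \<in> I \<and> f i = a. h i * g (f i))" for a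
  proof -
    have "(\<Sum>i | i \<in> I \<and> f i = a. h i * g (f i)) = (\<Sum>i | i \<in> I \<and> f i = a. h i) * g a"
      by (simp add: sum_distrib_right)
    also have "(\<Sum>i | i \<in> I \<and> f i = a. h i) = (\<Sum>i\<in>I. if f i = a then h i else 0)"
      using assms(1) by (simp add: sum.inter_filter)
    finally show ?thesis ..
  qed
  then show ?thesis
    using sum.group[OF assms, of "\<lambda>i. h i * g (f i)"] by simp
qed

lemma real_card_filter_lessThan: "real (card {i\<in>{..<n::nat}. P i}) = (\<Sum>i<n. if P i then 1 else 0)"
  unfolding real_of_card by (rule sum.inter_filter) simp

lemma block_count_diff:
  "block_count n f A a b - block_count n f B a b = block_count n f (\<lambda>i j. A i j - B i j) a b"
  unfolding block_count_def by (auto simp flip: sum_subtractf intro!: sum.cong)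

lemma block_count_weighted_sum:
  assumes "\<And>i. i < n \<Longrightarrow> f i < k"
  shows "(\<Sum>a<k. \<Sum>b<k. block_count n f B a b * c a b) = (\<Sum>i<n. \<Sum>j<n. B i j * c (f i) (f j))"
proof -
  have "(\<Sum>p\<in>{..<k} \<times> {..<k}.
          (\<Sum>q\<in>{..<n} \<times> {..<n}. if map_prod f f q = p then B (fst q) (snd q) else 0) * c (fst p) (snd p))
      = (\<Sum>q\<in>{..<n} \<times> {..<n}. B (fst q) (snd q) * c (fst (map_prod f f q)) (snd (map_prod f f q)))"
    using assms by (intro sum_fibres_weighted) auto
  moreover have "map_prod f f q = p \<longleftrightarrow> f (fst q) = fst p \<and> f (snd q) = snd p" for p q
    by (auto simp: prod_eq_iff)
  ultimately show ?thesis
    by (simp add: block_count_def sum.cartesian_product split_def)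
qed

lemma C_t_confusion_eq:
  assumes e: "\<And>i. i < n \<Longrightarrow> e i < k" and z: "\<And>i. i < n \<Longrightarrow> z i < k"
  shows "(real n)^2 * C_t k t (confusion n e z) S
       = (\<Sum>i<n. \<Sum>j<n. if z j \<noteq> e j then K_t t (S (z i) (z j)) (S (z i) (e j)) else 0)"
proof (cases "n = 0")
  case True
  then show ?thesis by (simp add: C_t_def confusion_def)
next
  case False
  define G where "G a b b' = (if b \<noteq> b' then K_t t (S a b) (S a b') else 0)" for a b b'
  have n_confusion:
    "real n * confusion n e z (snd p) (fst p) = (\<Sum>j<n. if (z j, e j) = p then 1 else 0)" for p
    using False unfolding confusion_def real_card_filter_lessThan
    by (auto intro: sum.cong simp: prod_eq_iff)
  have n_class_size: "real n * (\<Sum>c<k. confusion n e z c a) = (\<Sum>i<n. if z i = a then 1 else 0)" for a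
  proof -
    have "real n * (\<Sum>c<k. confusion n e z c a)
        = (\<Sum>c<k. (\<Sum>i<n. if e i = c then (if z i = a then 1 else 0) else 0) * 1)"
      unfolding sum_distrib_left n_confusion[of "(a, _)", simplified]
      by (intro sum.cong) (auto intro: sum.cong)
    also have "\<dots> = (\<Sum>i<n. if z i = a then 1 else 0)"
      using e by (subst sum_fibres_weighted) auto
    finally show ?thesis .
  qed
  have summand: "(real n)^2 * (if b \<noteq> b' then X * K_t t (S a b) (S a b') * Y else 0)
      = (real n * X) * ((real n * Y) * G a b b')" for X Y a b b'
    by (simp add: G_def power2_eq_square)
  have "(real n)^2 * C_t k t (confusion n e z) S
      = (\<Sum>a<k. \<Sum>b<k. \<Sum>b'<k.
           (real n * (\<Sum>c<k. confusion n e z c a)) * ((real n * confusion n e z b' b) * G a b b'))"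
    by (simp only: C_t_def sum_distrib_left[of "(real n)^2"] summand)
  also have "\<dots> = (\<Sum>a<k. (real n * (\<Sum>c<k. confusion n e z c a))
           * (\<Sum>p\<in>{..<k} \<times> {..<k}. (real n * confusion n e z (snd p) (fst p)) * G a (fst p) (snd p)))"
    by (simp only: sum_distrib_left[of "real n * _"] sum.cartesian_product split_def
        fst_conv snd_conv)
  also have "\<dots> = (\<Sum>a<k. (\<Sum>i<n. if z i = a then 1 else 0) * (\<Sum>j<n. G a (z j) (e j)))"
  proof -
    have "(\<Sum>p\<in>{..<k} \<times> {..<k}. (\<Sum>j<n. if (z j, e j) = p then 1 else 0) * G a (fst p) (snd p))
        = (\<Sum>j<n. G a (z j) (e j))" for a
      using e z by (subst sum_fibres_weighted) auto
    then show ?thesis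
      unfolding n_class_size n_confusion by simp
  qed
  also have "\<dots> = (\<Sum>i<n. \<Sum>j<n. G (z i) (z j) (e j))"
    using z by (subst sum_fibres_weighted) auto
  finally show ?thesis
    unfolding G_def .
qed

lemma sum_sbm_edges_K_t_le:
  assumes e: "\<And>i. i < n \<Longrightarrow> e i < k" and z: "\<And>i. i < n \<Longrightarrow> z i < k"
    and S: "\<forall>a<k. \<forall>b<k. S a b > 0" and S_sym: "\<forall>a<k. \<forall>b<k. S a b = S b a"
    and t: "0 \<le> t" "t \<le> 1"
  shows "(\<Sum>(i, j)\<in>sbm_edges n. K_t t (S (z i) (z j)) (S (e i) (e j)))
     \<le> (real n)^2 * C_t k t (confusion n e z) S + K_t_bound k S * (real (hamming n e z))^2"
proof -
  define D where "D = K_t_bound k S"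
  define T where "T i j = (if z j \<noteq> e j then K_t t (S (z i) (z j)) (S (z i) (e j)) else 0)" for i j
  define G where "G i j = T i j + D * (of_bool (e i \<noteq> z i) * of_bool (e j \<noteq> z j))" for i j
  have D_nonneg: "D \<ge> 0"
    unfolding D_def K_t_bound_def using S
    by (intro sum_nonneg add_nonneg_nonneg mult_nonneg_nonneg)
      (auto simp: le_max_iff_disj intro: less_imp_le)
  have T_nonneg: "T i j \<ge> 0" if "i < n" "j < n" for i j
    unfolding T_def using that e z S by (auto intro!: K_t_nonneg)
  have G_nonneg: "G i j \<ge> 0" if "i < n" "j < n" for i j
    unfolding G_def using T_nonneg[OF that] D_nonneg by simp
  have edge_le: "K_t t (S (z i) (z j)) (S (e i) (e j)) \<le> G i j + G j i"
    if "(i, j) \<in> sbm_edges n" for i j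
  proof -
    from that have ij: "i < n" "j < n"
      by (auto simp: sbm_edges_def)
    then have labels: "z i < k" "z j < k" "e i < k" "e j < k"
      using z e by auto
    consider (kept) "z i = e i" "z j = e j" | (moved_i) "z i \<noteq> e i" "z j = e j"
      | (moved_j) "z i = e i" "z j \<noteq> e j" | (both_moved) "z i \<noteq> e i" "z j \<noteq> e j"
      by blast
    then show ?thesis
    proof cases
      case kept
      then show ?thesis
        using G_nonneg[OF ij] G_nonneg[OF ij(2,1)] labels S by (simp add: K_t_self)
    next
      case moved_i
      then have "K_t t (S (z i) (z j)) (S (e i) (e j)) = T j i"
        unfolding T_def using labels S_sym by simp
      then show ?thesis
        using moved_i G_nonneg[OF ij] by (simp add: G_def)
    next
      case moved_j
      then have "K_t t (S (z i) (z j)) (S (e i) (e j)) = T i j"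
        unfolding T_def by simp
      then show ?thesis
        using moved_j G_nonneg[OF ij(2,1)] by (simp add: G_def)
    next
      case both_moved
      have "K_t t (S (z i) (z j)) (S (e i) (e j)) \<le> D"
        unfolding D_def using labels S t by (intro K_t_le_K_t_bound) auto
      then show ?thesis
        using both_moved T_nonneg[OF ij] G_nonneg[OF ij(2,1)] by (simp add: G_def)
    qed
  qed
  have hamming_sq:
    "(\<Sum>i<n. \<Sum>j<n. of_bool (e i \<noteq> z i) * of_bool (e j \<noteq> z j)) = (real (hamming n e z))^2"
    unfolding power2_eq_square sum_product[symmetric] by (simp add: hamming_def Int_def)
  have "(\<Sum>(i, j)\<in>sbm_edges n. K_t t (S (z i) (z j)) (S (e i) (e j)))
      \<le> (\<Sum>(i, j)\<in>sbm_edges n. G i j + G j i)"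
    using edge_le by (intro sum_mono) auto
  also have "\<dots> \<le> (\<Sum>i<n. \<Sum>j<n. G i j)"
    using G_nonneg by (rule sum_sbm_edges_le_sum_square)
  also have "\<dots> = (\<Sum>i<n. \<Sum>j<n. T i j)
      + D * (\<Sum>i<n. \<Sum>j<n. of_bool (e i \<noteq> z i) * of_bool (e j \<noteq> z j))"
    by (simp only: G_def sum.distrib sum_distrib_left)
  also have "\<dots> = (real n)^2 * C_t k t (confusion n e z) S + D * (real (hamming n e z))^2"
    using C_t_confusion_eq[OF e z, where t = t and S = S] unfolding T_def hamming_sq by simp
  finally show ?thesis
    unfolding D_def .
qed

definition sbm_edge_pmf ::
    "nat \<Rightarrow> real \<Rightarrow> (nat \<Rightarrow> nat \<Rightarrow> real) \<Rightarrow> (nat \<Rightarrow> nat) \<Rightarrow> (nat \<times> nat \<Rightarrow> bool) pmf" where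
  "sbm_edge_pmf n \<rho> S z = Pi_pmf (sbm_edges n) False (\<lambda>(i, j). bernoulli_pmf (\<rho> * S (z i) (z j)))"

lemma sbm_cond_eq_map_sbm_edge_pmf: "sbm_cond n \<rho> S z = map_pmf sbm_adj (sbm_edge_pmf n \<rho> S z)"
  unfolding sbm_cond_def sbm_edge_pmf_def ..

lemma finite_set_pmf_sbm_edge_pmf: "finite (set_pmf (sbm_edge_pmf n \<rho> S z))"
  unfolding sbm_edge_pmf_def by (auto simp: set_Pi_pmf finite_sbm_edges intro!: finite_PiE_dflt)

lemma finite_set_pmf_sbm_cond: "finite (set_pmf (sbm_cond n \<rho> S z))"
  by (simp add: sbm_cond_eq_map_sbm_edge_pmf finite_set_pmf_sbm_edge_pmf)

lemma expectation_block_count: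
  assumes "finite (set_pmf M)"
  shows "measure_pmf.expectation M (\<lambda>B. block_count n f B a b)
       = block_count n f (\<lambda>i j. measure_pmf.expectation M (\<lambda>B. B i j)) a b"
proof -
  have "measure_pmf.expectation M (\<lambda>B. if P then B i j else 0)
      = (if P then measure_pmf.expectation M (\<lambda>B. B i j) else 0)" for P i j
    by simp
  then show ?thesis
    unfolding block_count_def using assms by (simp add: integrable_measure_pmf_finite)
qed

lemma expectation_sbm_adj:
  assumes z: "\<And>i. i < n \<Longrightarrow> z i < k"
    and S: "\<forall>a<k. \<forall>b<k. S a b > 0" and S_sym: "\<forall>a<k. \<forall>b<k. S a b = S b a"
    and \<rho>: "\<rho> > 0" "\<forall>a<k. \<forall>b<k. \<rho> * S a b \<le> 1"
    and "i < n" "j < n"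
  shows "measure_pmf.expectation (sbm_cond n \<rho> S z) (\<lambda>B. B i j)
           = (if i = j then 0 else \<rho> * S (z i) (z j))"
proof -
  have edge_mean: "measure_pmf.expectation (sbm_cond n \<rho> S z) (\<lambda>B. B i' j') = \<rho> * S (z i') (z j')"
    if "i' < j'" "j' < n" for i' j'
  proof -
    have "(i', j') \<in> sbm_edges n"
      using that by (simp add: sbm_edges_def)
    then have "map_pmf (\<lambda>Y. Y (i', j')) (sbm_edge_pmf n \<rho> S z)
        = bernoulli_pmf (\<rho> * S (z i') (z j'))"
      unfolding sbm_edge_pmf_def by (simp add: Pi_pmf_component finite_sbm_edges)
    moreover have "0 \<le> \<rho> * S (z i') (z j')" "\<rho> * S (z i') (z j') \<le> 1"
      using that z S \<rho> by (auto intro: less_imp_le)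
    moreover have "measure_pmf.expectation (sbm_cond n \<rho> S z) (\<lambda>B. B i' j')
        = measure_pmf.expectation (map_pmf (\<lambda>Y. Y (i', j')) (sbm_edge_pmf n \<rho> S z)) of_bool"
      using that by (simp add: sbm_cond_eq_map_sbm_edge_pmf sbm_adj_def)
    ultimately show ?thesis
      by simp
  qed
  consider (below) "i < j" | (above) "j < i" | (diagonal) "i = j"
    by linarith
  then show ?thesis
  proof cases
    case below
    then show ?thesis
      using edge_mean[of i j] assms by simp
  next
    case above
    then have "measure_pmf.expectation (sbm_cond n \<rho> S z) (\<lambda>B. B i j)
        = measure_pmf.expectation (sbm_cond n \<rho> S z) (\<lambda>B. B j i)"
      by (simp add: sbm_cond_eq_map_sbm_edge_pmf sbm_adj_def)
    then show ?thesis
      using above edge_mean[of j i] assms by simp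
  next
    case diagonal
    then show ?thesis
      by (simp add: sbm_cond_eq_map_sbm_edge_pmf sbm_adj_def)
  qed
qed

lemma sbm_W_eq_sum_sbm_edges:
  assumes e: "\<And>i. i < n \<Longrightarrow> e i < k" and z: "\<And>i. i < n \<Longrightarrow> z i < k"
    and S: "\<forall>a<k. \<forall>b<k. S a b > 0" and S_sym: "\<forall>a<k. \<forall>b<k. S a b = S b a"
    and \<rho>: "\<rho> > 0" "\<forall>a<k. \<forall>b<k. \<rho> * S a b \<le> 1"
    and A_sym: "\<And>i j. i < n \<Longrightarrow> j < n \<Longrightarrow> A i j = A j i" and A_diag: "\<And>i. i < n \<Longrightarrow> A i i = 0"
  shows "(real n)^2 * sbm_W n k \<rho> S z e A
       = (\<Sum>(i, j)\<in>sbm_edges n.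
            (A i j - \<rho> * S (z i) (z j)) * (ln (S (e i) (e j)) - ln (S (z i) (z j))))"
proof (cases "n = 0")
  case True
  then show ?thesis by (simp add: sbm_edges_def)
next
  case False
  define Q where "Q i j = measure_pmf.expectation (sbm_cond n \<rho> S z) (\<lambda>B. B i j)" for i j
  define F where "F i j = (A i j - Q i j) * (ln (S (e i) (e j)) - ln (S (z i) (z j)))" for i j
  have Q: "Q i j = (if i = j then 0 else \<rho> * S (z i) (z j))" if "i < n" "j < n" for i j
    unfolding Q_def using z S S_sym \<rho> that by (rule expectation_sbm_adj)
  have regroup: "(x1 / N - x2 / N - x3 / N + x4 / N) * l = ((x1 - x2) * l - (x3 - x4) * l) / N"
    for x1 x2 x3 x4 N l :: real
    by (simp add: diff_divide_distrib add_divide_distrib algebra_simps)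
  have "(real n)^2 * sbm_W n k \<rho> S z e A
      = (real n)^2 * (1/2 * (\<Sum>a<k. \<Sum>b<k. (block_count n e (\<lambda>i j. A i j - Q i j) a b * ln (S a b)
             - block_count n z (\<lambda>i j. A i j - Q i j) a b * ln (S a b)) / (real n)^2))"
    unfolding sbm_W_def expectation_block_count[OF finite_set_pmf_sbm_cond] Q_def[symmetric] regroup
      block_count_diff ..
  also have "\<dots> = 1/2 * ((\<Sum>a<k. \<Sum>b<k. block_count n e (\<lambda>i j. A i j - Q i j) a b * ln (S a b))
             - (\<Sum>a<k. \<Sum>b<k. block_count n z (\<lambda>i j. A i j - Q i j) a b * ln (S a b)))"
    using False by (simp add: sum_subtractf flip: sum_divide_distrib)
  also have "\<dots> = 1/2 * (\<Sum>i<n. \<Sum>j<n. F i j)"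
    by (simp add: block_count_weighted_sum[OF e] block_count_weighted_sum[OF z] F_def
        sum_subtractf right_diff_distrib)
  also have "\<dots> = (\<Sum>(i, j)\<in>sbm_edges n. F i j)"
    by (subst sum_square_eq_sum_sbm_edges) (auto simp: F_def Q A_sym A_diag S_sym e z)
  also have "\<dots> = (\<Sum>(i, j)\<in>sbm_edges n.
      (A i j - \<rho> * S (z i) (z j)) * (ln (S (e i) (e j)) - ln (S (z i) (z j))))"
    by (intro sum.cong) (auto simp: sbm_edges_def F_def Q)
  finally show ?thesis .
qed

lemma sbm_W_tail_le_K_t_sum:
  assumes e: "\<And>i. i < n \<Longrightarrow> e i < k" and z: "\<And>i. i < n \<Longrightarrow> z i < k"
    and S: "\<forall>a<k. \<forall>b<k. S a b > 0" and S_sym: "\<forall>a<k. \<forall>b<k. S a b = S b a"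
    and \<rho>: "\<rho> > 0" "\<forall>a<k. \<forall>b<k. \<rho> * S a b \<le> 1"
    and t: "t \<ge> 0"
  shows "measure_pmf.prob (sbm_cond n \<rho> S z) {A. sbm_W n k \<rho> S z e A > x}
    \<le> exp (- t * (real n)^2 * x + \<rho> * (\<Sum>(i, j)\<in>sbm_edges n. K_t t (S (z i) (z j)) (S (e i) (e j))))"
proof -
  define M where "M = sbm_edge_pmf n \<rho> S z"
  define p where "p = (\<lambda>(i, j). \<rho> * S (z i) (z j))"
  define L where "L = (\<lambda>(i, j). ln (S (e i) (e j)) - ln (S (z i) (z j)))"
  have p_prob: "0 \<le> p ij" "p ij \<le> 1" if "ij \<in> sbm_edges n" for ij
    using that z S \<rho> by (auto simp: p_def sbm_edges_def intro: less_imp_le)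
  have W_adj: "t * (real n)^2 * sbm_W n k \<rho> S z e (sbm_adj Y)
      = (\<Sum>ij\<in>sbm_edges n. t * L ij * (of_bool (Y ij) - p ij))" for Y
  proof -
    have "(real n)^2 * sbm_W n k \<rho> S z e (sbm_adj Y)
        = (\<Sum>ij\<in>sbm_edges n. (of_bool (Y ij) - p ij) * L ij)"
      using e z S S_sym \<rho> by (subst sbm_W_eq_sum_sbm_edges)
        (auto simp: sbm_adj_def sbm_edges_def p_def L_def intro!: sum.cong)
    then show ?thesis
      by (simp add: sum_distrib_left ac_simps)
  qed
  have "measure_pmf.prob (sbm_cond n \<rho> S z) {A. sbm_W n k \<rho> S z e A > x}
      = measure_pmf.prob M {Y. sbm_W n k \<rho> S z e (sbm_adj Y) > x}"
    by (simp add: sbm_cond_eq_map_sbm_edge_pmf M_def vimage_def)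
  also have "\<dots> \<le> exp (- (t * (real n)^2) * x)
      * measure_pmf.expectation M (\<lambda>Y. exp (t * (real n)^2 * sbm_W n k \<rho> S z e (sbm_adj Y)))"
    using t by (intro prob_greater_le_exp_moment integrable_measure_pmf_finite)
      (auto simp: M_def finite_set_pmf_sbm_edge_pmf)
  also have "measure_pmf.expectation M (\<lambda>Y. exp (t * (real n)^2 * sbm_W n k \<rho> S z e (sbm_adj Y)))
      = (\<Prod>ij\<in>sbm_edges n.
           measure_pmf.expectation (bernoulli_pmf (p ij)) (\<lambda>v. exp (t * L ij * (of_bool v - p ij))))"
    unfolding W_adj exp_sum[OF finite_sbm_edges] M_def sbm_edge_pmf_def
    by (subst expectation_prod_Pi_pmf)
      (auto simp: finite_sbm_edges p_def case_prod_beta intro: integrable_measure_pmf_finite)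
  also have "\<dots> \<le> (\<Prod>ij\<in>sbm_edges n. exp (p ij * (exp (t * L ij) - 1 - t * L ij)))"
    using p_prob by (intro prod_mono conjI integral_nonneg bernoulli_centered_mgf_le) auto
  also have "\<dots> = exp (\<rho> * (\<Sum>(i, j)\<in>sbm_edges n. K_t t (S (z i) (z j)) (S (e i) (e j))))"
  proof -
    have edge: "p (i, j) * (exp (t * L (i, j)) - 1 - t * L (i, j))
        = \<rho> * K_t t (S (z i) (z j)) (S (e i) (e j))"
      if "(i, j) \<in> sbm_edges n" for i j
    proof -
      have "S (z i) (z j) > 0" "S (e i) (e j) > 0"
        using that e z S by (auto simp: sbm_edges_def)
      then show ?thesis
        by (simp add: p_def L_def K_t_eq_exp ln_div)
    qed
    have "(\<Prod>ij\<in>sbm_edges n. exp (p ij * (exp (t * L ij) - 1 - t * L ij)))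
        = (\<Prod>(i, j)\<in>sbm_edges n. exp (\<rho> * K_t t (S (z i) (z j)) (S (e i) (e j))))"
      using edge by (intro prod.cong) auto
    then show ?thesis
      by (simp add: exp_sum[OF finite_sbm_edges, symmetric] sum_distrib_left case_prod_beta)
  qed
  finally show ?thesis
    by (simp add: exp_add[symmetric] mult_left_mono)
qed

lemma sbm_W_tail_le:
  assumes e: "\<And>i. i < n \<Longrightarrow> e i < k" and z: "\<And>i. i < n \<Longrightarrow> z i < k"
    and S: "\<forall>a<k. \<forall>b<k. S a b > 0" and S_sym: "\<forall>a<k. \<forall>b<k. S a b = S b a"
    and \<rho>: "\<rho> > 0" "\<forall>a<k. \<forall>b<k. \<rho> * S a b \<le> 1"
    and t: "0 \<le> t" "t \<le> 1"
  shows "measure_pmf.prob (sbm_cond n \<rho> S z) {A. sbm_W n k \<rho> S z e A > x}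
    \<le> exp (- ((real n)^2 * (x * t - \<rho> * C_t k t (confusion n e z) S))
            + K_t_bound k S * \<rho> * (real (hamming n e z))^2)"
proof -
  have "measure_pmf.prob (sbm_cond n \<rho> S z) {A. sbm_W n k \<rho> S z e A > x}
      \<le> exp (- t * (real n)^2 * x + \<rho> * (\<Sum>(i, j)\<in>sbm_edges n. K_t t (S (z i) (z j)) (S (e i) (e j))))"
    using assms by (intro sbm_W_tail_le_K_t_sum) auto
  also have "\<dots> \<le> exp (- t * (real n)^2 * x
      + \<rho> * ((real n)^2 * C_t k t (confusion n e z) S + K_t_bound k S * (real (hamming n e z))^2))"
  proof -
    have "(\<Sum>(i, j)\<in>sbm_edges n. K_t t (S (z i) (z j)) (S (e i) (e j)))
        \<le> (real n)^2 * C_t k t (confusion n e z) S + K_t_bound k S * (real (hamming n e z))^2"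
      using assms by (intro sum_sbm_edges_K_t_le) auto
    then show ?thesis
      using \<rho> by (intro exp_mono add_left_mono mult_left_mono) auto
  qed
  also have "\<dots> = exp (- ((real n)^2 * (x * t - \<rho> * C_t k t (confusion n e z) S))
      + K_t_bound k S * \<rho> * (real (hamming n e z))^2)"
    by (simp add: algebra_simps)
  finally show ?thesis .
qed

theorem proposition2:
  fixes k :: nat and S :: "nat \<Rightarrow> nat \<Rightarrow> real"
  assumes "k \<ge> 2"
    and "\<forall>a<k. \<forall>b<k. S a b > 0"
    and "\<forall>a<k. \<forall>b<k. S a b = S b a"
  shows "\<exists>D::real. \<forall>\<rho>::nat \<Rightarrow> real.
    (\<forall>n. \<rho> n > 0) \<longrightarrow> \<rho> \<longlonglongrightarrow> 0 \<longrightarrow> (\<forall>n. \<forall>a<k. \<forall>b<k. \<rho> n * S a b \<le> 1) \<longrightarrow>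
    (\<forall>n z e x. z \<in> {..<n} \<rightarrow>\<^sub>E {..<k} \<longrightarrow> e \<in> {..<n} \<rightarrow>\<^sub>E {..<k} \<longrightarrow>
       measure_pmf.prob (sbm_cond n (\<rho> n) S z) {A. sbm_W n k (\<rho> n) S z e A > x}
       \<le> exp (- (SUP t\<in>{0<..1}. (real n)^2 * (x * t - \<rho> n * C_t k t (confusion n e z) S))
               + D * \<rho> n * (real (hamming n e z))^2))"
proof (intro exI[of _ "K_t_bound k S"] allI impI)
  fix \<rho> :: "nat \<Rightarrow> real" and n :: nat and z e :: "nat \<Rightarrow> nat" and x :: real
  assume "\<forall>n. \<rho> n > 0" "\<forall>n. \<forall>a<k. \<forall>b<k. \<rho> n * S a b \<le> 1"
    and "z \<in> {..<n} \<rightarrow>\<^sub>E {..<k}" "e \<in> {..<n} \<rightarrow>\<^sub>E {..<k}"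
  then show "measure_pmf.prob (sbm_cond n (\<rho> n) S z) {A. sbm_W n k (\<rho> n) S z e A > x}
    \<le> exp (- (SUP t\<in>{0<..1}. (real n)^2 * (x * t - \<rho> n * C_t k t (confusion n e z) S))
            + K_t_bound k S * \<rho> n * (real (hamming n e z))^2)"
    using assms(2,3) by (intro le_exp_SUP_bound sbm_W_tail_le) auto
qed

end
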